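(* Let $B=F(b_1,\ldots,b_n)$ be a Ferrers board with $0\le b_1\le\cdots\le b_n$ and $b_n>0$, and let $B^-=F(b_1,\ldots,b_{n-1})$. Then for all $1\le k\le n$, $$\mathbf{rT}_k(B,p,q)=\mathbf{rT}_k(B^-,p,q)+F_{b_{n-(k-1)}}(p,q)\,\mathbf{rT}_{k-1}(B^-,p,q).$$
   Context: For $m\ge 1$, a Fibonacci tiling of height $m$ is a tiling of a column of height $m$ by tiles of height 1 and height 2 whose bottom-most tile has height 1. For such a tiling $T$, $\mathrm{one}(T)$ and $\mathrm{two}(T)$ denote the numbers of tiles of height 1 and 2, and $F_m(p,q)=\sum_T q^{\mathrm{one}(T)}p^{\mathrm{two}(T)}$ over all Fibonacci tilings of height $m$ (so $F_1=q$, $F_2=q^2$, $F_m=qF_{m-1}+pF_{m-2}$ for $m\ge 3$). There are no Fibonacci tilings of height $0$, and $F_0(p,q)=0$. A Ferrers board $F(b_1,\ldots,b_n)$ is the board whose columns, from left to right, have heights $b_1,\ldots,b_n$. A Fibonacci rook placement of $k$ tilings in $B=F(b_1,\ldots,b_n)$ consists of a choice of columns $1\le i_1<\cdots<i_k\le n$ together with, for each $s=1,\ldots,k$, a Fibonacci tiling of height $b_{i_s-(s-1)}$ placed in column $i_s$ (this is the number of cells of column $i_s$ not canceled by the tilings in columns $i_1,\ldots,i_{s-1}$, where each tiling cancels top cells of the columns to its right so that after placing $s$ tilings the untiled columns have $b_1,\ldots,b_{n-s}$ uncanceled cells from left to right). Its weight is $q^{a}p^{b}$ where $a$ (resp. $b$)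 is the total number of tiles of height 1 (resp. 2) used. $\mathbf{rT}_k(B,p,q)$ is the sum of the weights of all Fibonacci rook placements of $k$ tilings in $B$ (the empty placement, $k=0$, has weight 1; the sum is $0$ if there are none). *)

theory Defs
  imports Main
begin

(* A Fibonacci tiling of height m: list of tile heights listed from bottom to top,
   each 1 or 2, summing to m, bottom-most tile of height 1. *)
definition fib_tilings :: "nat \<Rightarrow> nat list set" where
  "fib_tilings m = {t. t \<noteq> [] \<and> set t \<subseteq> {1,2} \<and> sum_list t = m \<and> hd t = 1}"

definition tweight :: "'a::comm_semiring_1 \<Rightarrow> 'a \<Rightarrow> nat list \<Rightarrow> 'a" where
  "tweight p q t = q ^ count_list t 1 * p ^ count_list t 2"

definition Fib :: "nat \<Rightarrow> 'a::comm_semiring_1 \<Rightarrow> 'a \<Rightarrow> 'a" where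
  "Fib m p q = (\<Sum>t\<in>fib_tilings m. tweight p q t)"

(* Ferrers board F(b_1,...,b_n) is the list b with b_i = b ! (i-1).
   A placement of k tilings: columns cs (1-indexed, strictly increasing, in {1..n})
   and tilings ts, the s-th (0-indexed) tiling having height b_{i_s - s}
   (1-indexed), i.e. list index cs!s - s - 1. *)
definition fib_placements :: "nat \<Rightarrow> nat list \<Rightarrow> (nat list \<times> nat list list) set" where
  "fib_placements k b = {(cs, ts). length cs = k \<and> length ts = k \<and> sorted_wrt (<) cs
      \<and> set cs \<subseteq> {1..length b}
      \<and> (\<forall>s<k. ts ! s \<in> fib_tilings (b ! (cs ! s - s - 1)))}"

definition placement_weight :: "'a::comm_semiring_1 \<Rightarrow> 'a \<Rightarrow> nat list list \<Rightarrow> 'a" where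
  "placement_weight p q ts =
     q ^ (\<Sum>t\<leftarrow>ts. count_list t 1) * p ^ (\<Sum>t\<leftarrow>ts. count_list t 2)"

definition rT :: "nat \<Rightarrow> nat list \<Rightarrow> 'a::comm_semiring_1 \<Rightarrow> 'a \<Rightarrow> 'a" where
  "rT k b p q = (\<Sum>(cs, ts)\<in>fib_placements k b. placement_weight p q ts)"

end

theory Submission
  imports Defs
begin

text \<open>Split the placements of \<open>k\<close> tilings in \<open>B\<close> according to whether the last column
carries a tiling. If it does not, the placement is literally a placement in \<open>B\<^sup>-\<close>. If it
does, that tiling is the last one placed (columns increase), so its height is
\<open>b\<^bsub>n-(k-1)\<^esub>\<close>; removing it leaves a placement of \<open>k - 1\<close> tilings in \<open>B\<^sup>-\<close>, because the heights
prescribed for the earlier tilings only read the first \<open>n - 1\<close> columns. Weights are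
multiplicative, so the second part sums to \<open>F(b\<^bsub>n-(k-1)\<^esub>) \<cdot> rT\<^bsub>k-1\<^esub>(B\<^sup>-)\<close>.\<close>

lemma length_le_sum_list: "0 \<notin> set t \<Longrightarrow> length t \<le> sum_list (t :: nat list)"
  by (induction t) auto

lemma finite_fib_tilings: "finite (fib_tilings m)"
proof -
  have "fib_tilings m \<subseteq> {t. set t \<subseteq> {1,2} \<and> length t \<le> m}"
    unfolding fib_tilings_def using length_le_sum_list by fastforce
  then show ?thesis
    using finite_lists_length_le[of "{1,2::nat}" m] finite_subset by blast
qed

lemma finite_fib_placements: "finite (fib_placements k b)"
proof -
  let ?T = "\<Union>m\<in>set b. fib_tilings m"
  have "set ts \<subseteq> ?T" if "(cs, ts) \<in> fib_placements k b" for cs ts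
  proof
    fix t assume "t \<in> set ts"
    moreover have "length ts = k"
      using that unfolding fib_placements_def by blast
    ultimately obtain s where s: "s < k" "t = ts ! s"
      by (metis in_set_conv_nth)
    have "cs ! s \<in> {1..length b}"
      using that s nth_mem unfolding fib_placements_def by fastforce
    then have "b ! (cs ! s - s - 1) \<in> set b"
      by (intro nth_mem) auto
    moreover have "t \<in> fib_tilings (b ! (cs ! s - s - 1))"
      using that s unfolding fib_placements_def by auto
    ultimately show "t \<in> ?T" by blast
  qed
  then have "fib_placements k b \<subseteq> {cs. set cs \<subseteq> {1..length b} \<and> length cs = k}
      \<times> {ts. set ts \<subseteq> ?T \<and> length ts = k}"
    unfolding fib_placements_def by auto
  moreover have "finite ({cs. set cs \<subseteq> {1..length b} \<and> length cs = k}
      \<times> {ts. set ts \<subseteq> ?T \<and> length ts = k})"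
    by (intro finite_cartesian_product finite_lists_length_eq)
      (auto simp: finite_fib_tilings)
  ultimately show ?thesis
    using finite_subset by blast
qed

lemma fib_placements_append_columns:
  assumes "set cs \<subseteq> {1..length b}"
  shows "(cs, ts) \<in> fib_placements k (b @ bs) \<longleftrightarrow> (cs, ts) \<in> fib_placements k b"
proof -
  have "(b @ bs) ! (cs ! s - s - 1) = b ! (cs ! s - s - 1)" if "s < length cs" for s
  proof -
    have "cs ! s \<in> {1..length b}"
      using assms nth_mem that by blast
    then have "cs ! s - s - 1 < length b"
      by auto
    then show ?thesis
      by (simp add: nth_append)
  qed
  then show ?thesis
    using assms unfolding fib_placements_def by auto
qed

lemma fib_placements_snoc:
  "(cs @ [c], ts @ [t]) \<in> fib_placements (Suc k) b \<longleftrightarrow>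
     (cs, ts) \<in> fib_placements k b \<and> (\<forall>x\<in>set cs. x < c) \<and> c \<in> {1..length b}
     \<and> t \<in> fib_tilings (b ! (c - k - 1))"
  unfolding fib_placements_def
  by (auto simp: sorted_wrt_append nth_append All_less_Suc)

lemma fib_placements_avoiding_last_column:
  "{(cs, ts) \<in> fib_placements k (b @ [m]). Suc (length b) \<notin> set cs} = fib_placements k b"
proof -
  have "(cs, ts) \<in> fib_placements k (b @ [m]) \<and> Suc (length b) \<notin> set cs
      \<longleftrightarrow> (cs, ts) \<in> fib_placements k b" for cs ts
  proof (cases "set cs \<subseteq> {1..length b}")
    case True
    then show ?thesis
      using fib_placements_append_columns[OF True, of ts k "[m]"] by auto
  next
    case False
    then have "\<not> set cs \<subseteq> {1..Suc (length b)} \<or> Suc (length b) \<in> set cs"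
      by (auto simp: subset_iff le_Suc_eq)
    with False show ?thesis
      unfolding fib_placements_def by auto
  qed
  then show ?thesis
    by auto
qed

lemma fib_placements_using_last_column:
  "{(cs, ts) \<in> fib_placements (Suc k) (b @ [m]). Suc (length b) \<in> set cs} =
     (\<lambda>((cs, ts), t). (cs @ [Suc (length b)], ts @ [t]))
       ` (fib_placements k b \<times> fib_tilings ((b @ [m]) ! (length b - k)))"
  (is "?L = ?f ` (?P \<times> ?T)")
proof
  show "?L \<subseteq> ?f ` (?P \<times> ?T)"
  proof clarify
    fix cs0 ts0
    assume placed: "(cs0, ts0) \<in> fib_placements (Suc k) (b @ [m])"
      and last_col: "Suc (length b) \<in> set cs0"
    then have "length cs0 = Suc k" "length ts0 = Suc k"
      unfolding fib_placements_def by auto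
    then obtain cs c ts t where split: "cs0 = cs @ [c]" "ts0 = ts @ [t]"
      by (metis length_Suc_conv_rev)
    with placed have placed': "(cs, ts) \<in> fib_placements k (b @ [m])"
      and below: "\<forall>x\<in>set cs. x < c" and c: "c \<in> {1..Suc (length b)}"
      and t: "t \<in> fib_tilings ((b @ [m]) ! (c - k - 1))"
      by (auto simp: fib_placements_snoc)
    have "c = Suc (length b)"
      using last_col below c split by fastforce
    with c below have "set cs \<subseteq> {1..length b}"
      using placed' unfolding fib_placements_def by fastforce
    with placed' have "(cs, ts) \<in> ?P"
      using fib_placements_append_columns by blast
    with t \<open>c = Suc (length b)\<close> show "(cs0, ts0) \<in> ?f ` (?P \<times> ?T)"
      using split by (auto intro!: image_eqI[where x = "((cs, ts), t)"])
  qed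
  show "?f ` (?P \<times> ?T) \<subseteq> ?L"
  proof (rule image_subsetI)
    fix x
    assume "x \<in> ?P \<times> ?T"
    then obtain cs ts t where x: "x = ((cs, ts), t)" and placed: "(cs, ts) \<in> ?P"
      and t: "t \<in> ?T"
      by auto
    then have "set cs \<subseteq> {1..length b}"
      unfolding fib_placements_def by blast
    with placed have "(cs, ts) \<in> fib_placements k (b @ [m])"
      using fib_placements_append_columns by blast
    with \<open>set cs \<subseteq> {1..length b}\<close> t show "?f x \<in> ?L"
      unfolding x by (auto simp: fib_placements_snoc)
  qed
qed

lemma placement_weight_snoc:
  "placement_weight p q (ts @ [t]) = placement_weight p q ts * tweight p q t"
  unfolding placement_weight_def tweight_def by (simp add: power_add ac_simps)

lemma rT_snoc:
  fixes p q :: "'a::comm_semiring_1"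
  shows "rT (Suc k) (b @ [m]) p q =
    rT (Suc k) b p q + Fib ((b @ [m]) ! (length b - k)) p q * rT k b p q"
proof -
  let ?w = "\<lambda>(cs :: nat list, ts). placement_weight p q ts"
  let ?n = "Suc (length b)"
  let ?P = "fib_placements (Suc k) (b @ [m])"
  let ?T = "fib_tilings ((b @ [m]) ! (length b - k))"
  let ?f = "\<lambda>((cs, ts), t :: nat list). (cs @ [?n], ts @ [t])"
  have "rT (Suc k) (b @ [m]) p q =
      sum ?w {(cs, ts) \<in> ?P. ?n \<notin> set cs} + sum ?w {(cs, ts) \<in> ?P. ?n \<in> set cs}"
    unfolding rT_def
    by (subst sum.union_disjoint[symmetric])
      (auto intro: finite_subset[OF _ finite_fib_placements] arg_cong[where f = "sum ?w"])
  also have "sum ?w {(cs, ts) \<in> ?P. ?n \<notin> set cs} = rT (Suc k) b p q"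
    unfolding rT_def fib_placements_avoiding_last_column ..
  also have "sum ?w {(cs, ts) \<in> ?P. ?n \<in> set cs} = sum (?w \<circ> ?f) (fib_placements k b \<times> ?T)"
    unfolding fib_placements_using_last_column
    by (rule sum.reindex) (auto simp: inj_on_def)
  also have "\<dots> = (\<Sum>x\<in>fib_placements k b. \<Sum>t\<in>?T. ?w x * tweight p q t)"
    by (subst sum.cartesian_product) (auto simp: placement_weight_snoc intro!: sum.cong)
  also have "\<dots> = (\<Sum>x\<in>fib_placements k b. ?w x * Fib ((b @ [m]) ! (length b - k)) p q)"
    unfolding Fib_def by (simp add: sum_distrib_left)
  also have "\<dots> = Fib ((b @ [m]) ! (length b - k)) p q * rT k b p q"
    unfolding rT_def by (simp add: sum_distrib_right mult.commute)
  finally show ?thesis .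
qed

theorem theorem3:
  fixes b :: "nat list" and p q :: "'a::comm_semiring_1" and k :: nat
  assumes "sorted b" and "b \<noteq> []" and "last b > 0"
    and "1 \<le> k" and "k \<le> length b"
  shows "rT k b p q = rT k (butlast b) p q
           + Fib (b ! (length b - k)) p q * rT (k - 1) (butlast b) p q"
proof -
  obtain c m where b: "b = c @ [m]"
    using \<open>b \<noteq> []\<close> rev_exhaust by blast
  obtain j where k: "k = Suc j"
    using \<open>1 \<le> k\<close> by (metis Suc_le_D One_nat_def)
  show ?thesis
    using rT_snoc[of j c m p q] unfolding b k by simp
qed

end
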